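(* If $t$ is a positive integer multiple of $3$, then there is no nonzero $z\in\mathcal O_{\mathbb{Q}(\sqrt{-3})}$ that is $2$-powerfully unitarily $t$-perfect, i.e. with $I_2^*(z)=t$.
   Context: $\mathcal O_{\mathbb{Q}(\sqrt{-3})}=\mathbb{Z}[\frac{1+\sqrt{-3}}{2}]$ is a unique factorization domain. $|z|=\sqrt{z\bar z}$, $\arg(z)\in[0,2\pi)$. Let $A$ be the set of nonzero $z\in\mathcal O_{\mathbb{Q}(\sqrt{-3})}$ with $0\le \arg(z)<\pi/3$. Two elements are relatively prime if they have no nonunit common divisor. For nonzero $x,z$, write $x\Diamond z$ iff $x\in A$, $x\mid z$, and $x$ is relatively prime to $z/x$. For $m\in\mathbb{Z}$ define $\delta_m^*(z)=\sum_{x\Diamond z}|x|^m$ and $I_m^*(z)=\delta_m^*(z)/|z|^m$. *)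

theory Defs
  imports "HOL-Analysis.Analysis"
begin

definition omega :: complex where
  "omega = (1 + \<i> * complex_of_real (sqrt 3)) / 2"

definition Eis :: "complex set" where
  "Eis = {of_int a + of_int b * omega | a b :: int. True}"

definition eis_dvd :: "complex \<Rightarrow> complex \<Rightarrow> bool" where
  "eis_dvd x z \<longleftrightarrow> x \<in> Eis \<and> z \<in> Eis \<and> (\<exists>y\<in>Eis. z = x * y)"

definition eis_unit :: "complex \<Rightarrow> bool" where
  "eis_unit u \<longleftrightarrow> eis_dvd u 1"

definition eis_coprime :: "complex \<Rightarrow> complex \<Rightarrow> bool" where
  "eis_coprime x y \<longleftrightarrow> (\<forall>d. eis_dvd d x \<and> eis_dvd d y \<longrightarrow> eis_unit d)"

definition arg02pi :: "complex \<Rightarrow> real" where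
  "arg02pi z = (if Arg z < 0 then Arg z + 2 * pi else Arg z)"

definition EisA :: "complex set" where
  "EisA = {z \<in> Eis. z \<noteq> 0 \<and> 0 \<le> arg02pi z \<and> arg02pi z < pi / 3}"

definition unitary_div :: "complex \<Rightarrow> complex \<Rightarrow> bool" where
  "unitary_div x z \<longleftrightarrow> x \<in> EisA \<and> eis_dvd x z \<and> eis_coprime x (z / x)"

definition delta_star :: "int \<Rightarrow> complex \<Rightarrow> real" where
  "delta_star m z = (\<Sum>x\<in>{x. unitary_div x z}. cmod x powi m)"

definition I_star :: "int \<Rightarrow> complex \<Rightarrow> real" where
  "I_star m z = delta_star m z / (cmod z powi m)"

end

theory Submission
  imports Defs
begin

text \<open>The map \<open>(d, e) \<mapsto> d e\<close>, followed by rotation into the sector \<open>EisA\<close>, is a bijection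
  from pairs of unitary divisors of coprime \<open>a\<close> and \<open>b\<close> onto the unitary divisors of \<open>a b\<close>,
  so \<open>\<delta>\<^sup>*\<^sub>m\<close> is multiplicative. An element that is not a product of two coprime non-units
  has only the unitary divisors \<open>1\<close> and its own normal form, so there \<open>\<delta>\<^sup>*\<^sub>2 = 1\<close> or
  \<open>\<delta>\<^sup>*\<^sub>2 = 1 + N(z)\<close>. Norms \<open>a\<^sup>2 + a b + b\<^sup>2\<close> are never \<open>2\<close> mod \<open>3\<close>, so induction on
  the norm shows that \<open>\<delta>\<^sup>*\<^sub>2(z)\<close> is an integer prime to \<open>3\<close>, whereas \<open>I\<^sup>*\<^sub>2(z) = t\<close> would make
  it \<open>t N(z)\<close>. No unique factorisation is needed: Euclidean division gives Bezout identities,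
  which is all the coprimality reasoning uses.\<close>

section \<open>Eisenstein integers and their norm\<close>

lemma omega_Re: "Re omega = 1/2" and omega_Im: "Im omega = sqrt 3 / 2"
  by (simp_all add: omega_def)

lemma omega_squared: "omega * omega = omega - 1"
  by (simp add: omega_def complex_eq_iff power2_eq_square field_simps)

lemma cnj_omega: "cnj omega = 1 - omega"
  by (simp add: omega_def complex_eq_iff)

lemma cnj_omega_eq_cis: "cnj omega = cis (- (pi/3))"
  by (simp add: complex_eq_iff omega_def cos_60 sin_60)

lemma Eis_iff: "z \<in> Eis \<longleftrightarrow> (\<exists>a b::int. z = of_int a + of_int b * omega)"
  by (auto simp: Eis_def)

lemma Eis_of_int [simp]: "of_int n \<in> Eis"
  unfolding Eis_iff by (intro exI[of _ n] exI[of _ 0]) simp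

lemma Eis_0 [simp]: "0 \<in> Eis" and Eis_1 [simp]: "1 \<in> Eis"
  using Eis_of_int[of 0] Eis_of_int[of 1] by simp_all

lemma Eis_omega [simp]: "omega \<in> Eis"
  unfolding Eis_iff by (intro exI[of _ 0] exI[of _ 1]) simp

lemma Eis_add [simp]: "x \<in> Eis \<Longrightarrow> y \<in> Eis \<Longrightarrow> x + y \<in> Eis"
  unfolding Eis_iff
proof (elim exE)
  fix a b c d :: int
  assume "x = of_int a + of_int b * omega" "y = of_int c + of_int d * omega"
  then show "\<exists>a b::int. x + y = of_int a + of_int b * omega"
    by (intro exI[of _ "a + c"] exI[of _ "b + d"]) (simp add: algebra_simps)
qed

lemma Eis_uminus [simp]: "x \<in> Eis \<Longrightarrow> - x \<in> Eis"
  unfolding Eis_iff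
proof (elim exE)
  fix a b :: int
  assume "x = of_int a + of_int b * omega"
  then show "\<exists>a b::int. - x = of_int a + of_int b * omega"
    by (intro exI[of _ "- a"] exI[of _ "- b"]) (simp add: algebra_simps)
qed

lemma Eis_diff [simp]: "x \<in> Eis \<Longrightarrow> y \<in> Eis \<Longrightarrow> x - y \<in> Eis"
  using Eis_add[of x "- y"] by simp

lemma Eis_mult [simp]: "x \<in> Eis \<Longrightarrow> y \<in> Eis \<Longrightarrow> x * y \<in> Eis"
  unfolding Eis_iff
proof (elim exE)
  fix a b c d :: int
  assume xy: "x = of_int a + of_int b * omega" "y = of_int c + of_int d * omega"
  have "x * y = of_int a * of_int c + (of_int a * of_int d + of_int b * of_int c) * omega
      + of_int b * of_int d * (omega * omega)"
    unfolding xy by (simp add: algebra_simps)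
  also have "\<dots> = of_int (a*c - b*d) + of_int (a*d + b*c + b*d) * omega"
    unfolding omega_squared by (simp add: algebra_simps)
  finally show "\<exists>a b::int. x * y = of_int a + of_int b * omega"
    by blast
qed

lemma Eis_power [simp]: "x \<in> Eis \<Longrightarrow> x ^ n \<in> Eis"
  by (induction n) auto

lemma Eis_cnj [simp]: "x \<in> Eis \<Longrightarrow> cnj x \<in> Eis"
  unfolding Eis_iff
proof (elim exE)
  fix a b :: int
  assume "x = of_int a + of_int b * omega"
  then show "\<exists>a b::int. cnj x = of_int a + of_int b * omega"
    by (intro exI[of _ "a + b"] exI[of _ "- b"]) (simp add: cnj_omega algebra_simps)
qed

lemma cmod_power2_omega_coords:
  "(cmod (of_real x + of_real y * omega))^2 = x*x + x*y + y*y"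
proof -
  have "sqrt 3 * sqrt 3 = 3" by simp
  then have "(x + y/2)^2 + (y * sqrt 3 / 2)^2 = x*x + x*y + y*y"
    unfolding power2_eq_square by (simp add: algebra_simps)
  then show ?thesis
    by (simp add: cmod_power2 omega_Re omega_Im)
qed

text \<open>The rounding only changes the type: on \<open>Eis\<close> the square of the modulus is an integer.\<close>

definition eis_norm :: "complex \<Rightarrow> int" where
  "eis_norm z = round ((cmod z)^2)"

lemma eis_norm_coords: "eis_norm (of_int a + of_int b * omega) = a*a + a*b + b*b"
  using cmod_power2_omega_coords[of "of_int a" "of_int b"]
  by (simp add: eis_norm_def flip: of_int_mult of_int_add)

lemma of_int_eis_norm: "z \<in> Eis \<Longrightarrow> of_int (eis_norm z) = (cmod z)^2"
  using cmod_power2_omega_coords[of "of_int a" "of_int b" for a b]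
  by (auto simp: Eis_iff eis_norm_coords)

lemma eis_norm_pos: "z \<in> Eis \<Longrightarrow> z \<noteq> 0 \<Longrightarrow> eis_norm z > 0"
  using of_int_eis_norm[of z] by (metis of_int_0_less_iff zero_less_norm_iff zero_less_power)

lemma eis_norm_mult: "x \<in> Eis \<Longrightarrow> y \<in> Eis \<Longrightarrow> eis_norm (x * y) = eis_norm x * eis_norm y"
proof -
  assume xy: "x \<in> Eis" "y \<in> Eis"
  have "(of_int (eis_norm (x * y)) :: real) = (cmod x)^2 * (cmod y)^2"
    using xy by (simp add: of_int_eis_norm norm_mult power_mult_distrib)
  also have "\<dots> = of_int (eis_norm x * eis_norm y)"
    using xy by (simp add: of_int_eis_norm)
  finally show ?thesis
    by (simp only: of_int_eq_iff)
qed

lemma eis_norm_mod_3: "z \<in> Eis \<Longrightarrow> eis_norm z mod 3 \<noteq> 2"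
proof -
  assume "z \<in> Eis"
  then obtain a b :: int where z: "z = of_int a + of_int b * omega"
    by (auto simp: Eis_iff)
  have "a*a + a*b + b*b = (a - b)^2 + 3 * (a*b)"
    by (simp add: power2_eq_square algebra_simps)
  then have "(a*a + a*b + b*b) mod 3 = (a - b)^2 mod 3"
    by (metis mod_mult_self2)
  also have "\<dots> = ((a - b) mod 3)^2 mod 3"
    by (rule power_mod[symmetric])
  finally have "eis_norm z mod 3 = ((a - b) mod 3)^2 mod 3"
    unfolding z eis_norm_coords .
  moreover have "(a - b) mod 3 \<in> {0, 1, 2}"
    by auto
  ultimately show ?thesis
    by auto
qed

lemma Eis_cmod_less_1: "z \<in> Eis \<Longrightarrow> cmod z < 1 \<Longrightarrow> z = 0"
proof (rule ccontr)
  assume z: "z \<in> Eis" "cmod z < 1" "z \<noteq> 0"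
  have "(cmod z)^2 < 1"
    using z(2) by (simp add: power_less_one_iff)
  then have "eis_norm z < 1"
    using of_int_eis_norm[OF z(1)] by simp
  then show False
    using eis_norm_pos[OF z(1,3)] by simp
qed

section \<open>Divisibility, units and coprimality\<close>

lemma eis_dvdI: "x \<in> Eis \<Longrightarrow> y \<in> Eis \<Longrightarrow> z = x * y \<Longrightarrow> eis_dvd x z"
  by (auto simp: eis_dvd_def)

lemma eis_dvdE:
  assumes "eis_dvd x z"
  obtains y where "x \<in> Eis" "y \<in> Eis" "z = x * y"
  using assms by (auto simp: eis_dvd_def)

lemma eis_dvd_trans: "eis_dvd a b \<Longrightarrow> eis_dvd b c \<Longrightarrow> eis_dvd a c"
  unfolding eis_dvd_def by (auto intro!: bexI[where P = "\<lambda>y. _ = _ * y"])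

lemma eis_dvd_mult_right: "a \<in> Eis \<Longrightarrow> b \<in> Eis \<Longrightarrow> eis_dvd a (a * b)"
  by (rule eis_dvdI[of a b]) auto

lemma eis_dvd_mult_left: "a \<in> Eis \<Longrightarrow> b \<in> Eis \<Longrightarrow> eis_dvd b (a * b)"
  by (rule eis_dvdI[of b a]) auto

lemma cmod_power2_eq_1_iff: "(cmod z)^2 = 1 \<longleftrightarrow> cmod z = 1"
  by (metis norm_ge_zero power2_eq_1_iff one_neq_neg_one neg_0_le_iff_le le_minus_one_simps(3))

lemma eis_unit_iff: "eis_unit u \<longleftrightarrow> u \<in> Eis \<and> cmod u = 1"
proof
  assume "eis_unit u"
  then obtain v where u: "u \<in> Eis" and v: "v \<in> Eis" and uv: "1 = u * v"
    by (auto simp: eis_unit_def elim: eis_dvdE)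
  have "u \<noteq> 0"
    using uv by auto
  have "eis_norm u * eis_norm v = 1"
    using eis_norm_mult[OF u v] uv eis_norm_coords[of 1 0] by simp
  then have "eis_norm u = 1"
    using eis_norm_pos[OF u \<open>u \<noteq> 0\<close>] by (simp add: pos_zmult_eq_1_iff)
  then have "(cmod u)^2 = 1"
    using of_int_eis_norm[OF u] by simp
  then show "u \<in> Eis \<and> cmod u = 1"
    using u by (simp add: cmod_power2_eq_1_iff)
next
  assume u: "u \<in> Eis \<and> cmod u = 1"
  then have "1 = u * cnj u"
    using complex_norm_square[of u] by simp
  then show "eis_unit u"
    unfolding eis_unit_def using u by (intro eis_dvdI) auto
qed

lemma eis_unit_iff_norm: "z \<in> Eis \<Longrightarrow> eis_unit z \<longleftrightarrow> eis_norm z = 1"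
  using of_int_eis_norm[of z]
  by (auto simp: eis_unit_iff simp flip: cmod_power2_eq_1_iff of_int_eq_iff)

lemma eis_unit_imp_Eis: "eis_unit u \<Longrightarrow> u \<in> Eis"
  by (simp add: eis_unit_iff)

lemma eis_unit_nonzero: "eis_unit u \<Longrightarrow> u \<noteq> 0"
  by (auto simp: eis_unit_iff)

lemma eis_unit_1 [simp]: "eis_unit 1"
  by (simp add: eis_unit_iff)

lemma eis_unit_mult: "eis_unit u \<Longrightarrow> eis_unit v \<Longrightarrow> eis_unit (u * v)"
  by (simp add: eis_unit_iff norm_mult)

lemma eis_unit_inverse:
  assumes "eis_unit u"
  obtains v where "eis_unit v" "u * v = 1"
proof
  show "eis_unit (cnj u)" "u * cnj u = 1"
    using assms complex_norm_square[of u] by (simp_all add: eis_unit_iff)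
qed

lemma eis_dvd_unit_imp_unit: "eis_dvd d u \<Longrightarrow> eis_unit u \<Longrightarrow> eis_unit d"
  unfolding eis_unit_def by (rule eis_dvd_trans)

lemma eis_norm_nonunit: "z \<in> Eis \<Longrightarrow> z \<noteq> 0 \<Longrightarrow> \<not> eis_unit z \<Longrightarrow> eis_norm z \<ge> 2"
  using eis_norm_pos[of z] eis_unit_iff_norm[of z] by linarith

lemma Eis_nearest: "\<exists>q\<in>Eis. cmod (w - q) < 1"
proof -
  define y where "y = Im w * 2 / sqrt 3"
  define x where "x = Re w - y/2"
  have w: "w = of_real x + of_real y * omega"
    by (simp add: complex_eq_iff x_def y_def omega_Re omega_Im)
  define dx where "dx = x - of_int (round x)"
  define dy where "dy = y - of_int (round y)"
  have dx: "\<bar>dx\<bar> \<le> 1/2" and dy: "\<bar>dy\<bar> \<le> 1/2"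
    unfolding dx_def dy_def using of_int_round_abs_le[of x] of_int_round_abs_le[of y] by linarith+
  define q where "q = of_int (round x) + of_int (round y) * omega"
  have "w - q = of_real dx + of_real dy * omega"
    by (simp add: w q_def dx_def dy_def algebra_simps)
  then have "(cmod (w - q))^2 = dx*dx + dx*dy + dy*dy"
    by (simp add: cmod_power2_omega_coords)
  also have "\<dots> \<le> 3/4"
  proof -
    have "\<bar>dx\<bar> * \<bar>dx\<bar> \<le> 1/4" "\<bar>dx\<bar> * \<bar>dy\<bar> \<le> 1/4" "\<bar>dy\<bar> * \<bar>dy\<bar> \<le> 1/4"
      using mult_mono[OF dx dx] mult_mono[OF dx dy] mult_mono[OF dy dy] by simp_all
    then show ?thesis
      by (simp add: abs_mult_self_eq flip: abs_mult)
  qed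
  finally have "(cmod (w - q))^2 < 1^2"
    by simp
  then have "cmod (w - q) < 1"
    by (rule power_less_imp_less_base) simp
  moreover have "q \<in> Eis"
    by (auto simp: Eis_iff q_def)
  ultimately show ?thesis
    by blast
qed

lemma Eis_division:
  assumes "a \<in> Eis" "b \<in> Eis" "b \<noteq> 0"
  obtains q where "q \<in> Eis" "cmod (a - q * b) < cmod b"
proof -
  obtain q where q: "q \<in> Eis" "cmod (a/b - q) < 1"
    using Eis_nearest by blast
  have "a - q * b = (a/b - q) * b"
    using assms(3) by (simp add: field_simps)
  then have "cmod (a - q * b) = cmod (a/b - q) * cmod b"
    by (simp add: norm_mult)
  also have "\<dots> < cmod b"
    using q(2) assms(3) by simp
  finally show ?thesis
    using q(1) that by blast
qed

lemma Eis_ideal_least_norm_dvd: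
  assumes "I \<subseteq> Eis"
    and diff: "\<And>u v. u \<in> I \<Longrightarrow> v \<in> I \<Longrightarrow> u - v \<in> I"
    and mult: "\<And>q u. q \<in> Eis \<Longrightarrow> u \<in> I \<Longrightarrow> q * u \<in> I"
    and "g \<in> I" "g \<noteq> 0" and least: "\<And>h. h \<in> I \<Longrightarrow> h \<noteq> 0 \<Longrightarrow> eis_norm g \<le> eis_norm h"
    and "w \<in> I"
  shows "eis_dvd g w"
proof -
  have "g \<in> Eis" "w \<in> Eis"
    using assms(1,4,7) by auto
  then obtain q where q: "q \<in> Eis" "cmod (w - q * g) < cmod g"
    using Eis_division \<open>g \<noteq> 0\<close> by blast
  have r: "w - q * g \<in> I"
    using diff mult q(1) assms(4,7) by blast
  have "w - q * g = 0"
  proof (rule ccontr)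
    assume "w - q * g \<noteq> 0"
    then have "eis_norm g \<le> eis_norm (w - q * g)"
      using least r by blast
    moreover have "(cmod (w - q * g))^2 < (cmod g)^2"
      using q(2) by (simp add: power_strict_mono)
    ultimately show False
      using r \<open>g \<in> Eis\<close> assms(1) by (auto simp flip: of_int_eis_norm)
  qed
  then show ?thesis
    using \<open>g \<in> Eis\<close> q(1) by (intro eis_dvdI[of g q]) auto
qed

lemma eis_gcd_bezout:
  assumes x: "x \<in> Eis" and y: "y \<in> Eis" and "x \<noteq> 0"
  obtains g s t where "s \<in> Eis" "t \<in> Eis" "g = s * x + t * y" "g \<noteq> 0"
    "eis_dvd g x" "eis_dvd g y"
proof -
  define I where "I = {g. \<exists>s\<in>Eis. \<exists>t\<in>Eis. g = s * x + t * y}"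
  have "I \<subseteq> Eis"
    using x y by (auto simp: I_def)
  have "x \<in> I"
    unfolding I_def by (intro CollectI bexI[of _ 1] bexI[of _ 0]) auto
  have "y \<in> I"
    unfolding I_def by (intro CollectI bexI[of _ 0] bexI[of _ 1]) auto
  have "u - v \<in> I" if uv: "u \<in> I" "v \<in> I" for u v
  proof -
    obtain s t s' t' where "s \<in> Eis" "t \<in> Eis" "u = s * x + t * y"
      and "s' \<in> Eis" "t' \<in> Eis" "v = s' * x + t' * y"
      using uv unfolding I_def by blast
    then show ?thesis
      unfolding I_def
      by (intro CollectI bexI[of _ "s - s'"] bexI[of _ "t - t'"]) (auto simp: algebra_simps)
  qed
  moreover have "q * u \<in> I" if qu: "q \<in> Eis" "u \<in> I" for q u
  proof -
    obtain s t where "s \<in> Eis" "t \<in> Eis" "u = s * x + t * y"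
      using qu(2) unfolding I_def by blast
    then show ?thesis
      unfolding I_def using qu(1)
      by (intro CollectI bexI[of _ "q * s"] bexI[of _ "q * t"]) (auto simp: algebra_simps)
  qed
  moreover obtain g where g: "g \<in> I" "g \<noteq> 0"
    and least: "\<And>h. h \<in> I \<and> h \<noteq> 0 \<Longrightarrow> nat (eis_norm g) \<le> nat (eis_norm h)"
    using ex_has_least_nat[of "\<lambda>h. h \<in> I \<and> h \<noteq> 0" x "\<lambda>h. nat (eis_norm h)"]
      \<open>x \<in> I\<close> \<open>x \<noteq> 0\<close> by blast
  moreover have "eis_norm g \<le> eis_norm h" if "h \<in> I" "h \<noteq> 0" for h
    using least[of h] that \<open>I \<subseteq> Eis\<close> eis_norm_pos by force
  ultimately have "eis_dvd g x" "eis_dvd g y"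
    using Eis_ideal_least_norm_dvd[OF \<open>I \<subseteq> Eis\<close>] \<open>x \<in> I\<close> \<open>y \<in> I\<close> by blast+
  then show ?thesis
    using that g(1,2) unfolding I_def by blast
qed

lemma eis_coprime_sym: "eis_coprime x y \<Longrightarrow> eis_coprime y x"
  unfolding eis_coprime_def by blast

lemma eis_coprime_dvd: "eis_coprime x y \<Longrightarrow> eis_dvd a x \<Longrightarrow> eis_dvd b y \<Longrightarrow> eis_coprime a b"
  unfolding eis_coprime_def using eis_dvd_trans by blast

lemma eis_coprime_unit: "eis_unit u \<Longrightarrow> eis_coprime x u"
  unfolding eis_coprime_def using eis_dvd_unit_imp_unit by blast

lemma eis_coprime_unit_mult:
  assumes "eis_coprime x y" "eis_unit u" "eis_unit v" "x \<in> Eis" "y \<in> Eis"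
  shows "eis_coprime (u * x) (v * y)"
proof -
  have dvd_unit_cancel: "eis_dvd d w" if "eis_dvd d (u' * w)" "eis_unit u'" "w \<in> Eis" for d u' w
  proof -
    obtain u'' where u'': "eis_unit u''" "u' * u'' = 1"
      using eis_unit_inverse[OF \<open>eis_unit u'\<close>] .
    have "w = (u' * w) * u''"
      using u''(2) by (simp add: mult.commute mult.left_commute)
    then have "eis_dvd (u' * w) w"
      using that(2,3) u''(1) eis_unit_imp_Eis by (intro eis_dvdI) auto
    then show ?thesis
      by (rule eis_dvd_trans[OF that(1)])
  qed
  show ?thesis
    using assms dvd_unit_cancel unfolding eis_coprime_def by blast
qed

lemma bezout_imp_eis_coprime:
  assumes "s \<in> Eis" "t \<in> Eis" "s * x + t * y = 1"
  shows "eis_coprime x y"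
  unfolding eis_coprime_def
proof (intro allI impI)
  fix d
  assume "eis_dvd d x \<and> eis_dvd d y"
  then obtain x' y' where d: "d \<in> Eis" "x' \<in> Eis" "y' \<in> Eis" "x = d * x'" "y = d * y'"
    by (auto simp: eis_dvd_def)
  have "1 = d * (s * x' + t * y')"
    using assms(3) d by (simp add: algebra_simps)
  then show "eis_unit d"
    unfolding eis_unit_def using d assms by (intro eis_dvdI) auto
qed

lemma eis_coprime_imp_bezout:
  assumes "x \<in> Eis" "y \<in> Eis" "x \<noteq> 0" "eis_coprime x y"
  obtains s t where "s \<in> Eis" "t \<in> Eis" "s * x + t * y = 1"
proof -
  obtain g s t where g: "s \<in> Eis" "t \<in> Eis" "g = s * x + t * y" "eis_dvd g x" "eis_dvd g y"
    using eis_gcd_bezout[OF assms(1-3)] .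
  have "eis_unit g"
    using assms(4) g(4,5) unfolding eis_coprime_def by blast
  then obtain v where v: "eis_unit v" "g * v = 1"
    using eis_unit_inverse by blast
  have "(v * s) * x + (v * t) * y = 1"
    using v(2) g(3) by (simp add: algebra_simps)
  then show ?thesis
    by (rule that[rotated 2]) (use g(1,2) v(1) eis_unit_imp_Eis in auto)
qed

lemma eis_coprime_mult:
  assumes "x \<in> Eis" "y \<in> Eis" "w \<in> Eis" "x \<noteq> 0"
    and "eis_coprime x y" "eis_coprime x w"
  shows "eis_coprime x (y * w)"
proof -
  obtain s t where st: "s \<in> Eis" "t \<in> Eis" "s * x + t * y = 1"
    using eis_coprime_imp_bezout[OF assms(1,2,4,5)] .
  obtain s' t' where st': "s' \<in> Eis" "t' \<in> Eis" "s' * x + t' * w = 1"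
    using eis_coprime_imp_bezout[OF assms(1,3,4,6)] .
  have "(s * x + t * y) * (s' * x + t' * w) = 1"
    using st st' by simp
  then have "(s * s' * x + s * t' * w + t * y * s') * x + (t * t') * (y * w) = 1"
    by (simp add: algebra_simps)
  then show ?thesis
    using st st' assms(1-3) by (intro bezout_imp_eis_coprime) auto
qed

lemma eis_coprime_dvd_mult:
  assumes "d \<in> Eis" "e \<in> Eis" "f \<in> Eis" "d \<noteq> 0"
    and "eis_coprime d e" "eis_dvd d (e * f)"
  shows "eis_dvd d f"
proof -
  obtain s t where st: "s \<in> Eis" "t \<in> Eis" "s * d + t * e = 1"
    using eis_coprime_imp_bezout[OF assms(1,2,4,5)] .
  obtain k where k: "k \<in> Eis" "e * f = d * k"
    using assms(6) by (auto simp: eis_dvd_def)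
  have "f = (s * d + t * e) * f"
    using st by simp
  also have "\<dots> = d * (s * f + t * k)"
    using k by (simp add: algebra_simps)
  finally show ?thesis
    using assms st k by (intro eis_dvdI) auto
qed

text \<open>The "four number theorem": with \<open>g\<close> a gcd of \<open>x\<close> and \<open>a\<close>, the cofactor \<open>x / g\<close>
  is coprime to \<open>a / g\<close> and therefore divides \<open>b\<close>.\<close>

lemma eis_four_number:
  assumes "x \<in> Eis" "y \<in> Eis" "a \<in> Eis" "b \<in> Eis" "x \<noteq> 0" "x * y = a * b"
  obtains g h a' b' where "g \<in> Eis" "h \<in> Eis" "a' \<in> Eis" "b' \<in> Eis"
    "x = g * h" "y = a' * b'" "a = g * a'" "b = h * b'"
proof -
  obtain g s t where g: "s \<in> Eis" "t \<in> Eis" "g = s * x + t * a" "g \<noteq> 0"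
    "eis_dvd g x" "eis_dvd g a"
    using eis_gcd_bezout[OF assms(1,3,5)] .
  obtain h where h: "g \<in> Eis" "h \<in> Eis" "x = g * h"
    using g(5) by (rule eis_dvdE)
  obtain a' where a': "a' \<in> Eis" "a = g * a'"
    using g(6) by (rule eis_dvdE)
  have "h \<noteq> 0"
    using h assms(5) by auto
  have "g * (s * h + t * a') = g * 1"
    using g(3) h(3) a'(2) by (simp add: algebra_simps)
  then have "eis_coprime h a'"
    using g(1,2,4) by (intro bezout_imp_eis_coprime[of s t]) auto
  moreover have hy: "h * y = a' * b"
    using assms(6) h(3) a'(2) g(4) by (simp add: algebra_simps)
  then have "eis_dvd h (a' * b)"
    using h assms(2) by (intro eis_dvdI[of h y]) auto
  ultimately have "eis_dvd h b"
    using eis_coprime_dvd_mult h(2) a'(1) assms(4) \<open>h \<noteq> 0\<close> by blast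
  then obtain b' where b': "b' \<in> Eis" "b = h * b'"
    by (auto elim: eis_dvdE)
  have "y = a' * b'"
    using hy b'(2) \<open>h \<noteq> 0\<close> by (simp add: algebra_simps)
  then show ?thesis
    using that h a' b' by blast
qed

lemma eis_dvd_antisym:
  assumes "eis_dvd a b" "eis_dvd b a" "a \<noteq> 0"
  obtains w where "eis_unit w" "b = w * a"
proof -
  obtain k where k: "k \<in> Eis" "b = a * k"
    using assms(1) by (auto elim: eis_dvdE)
  obtain l where l: "l \<in> Eis" "a = b * l"
    using assms(2) by (auto elim: eis_dvdE)
  have "a * (k * l) = a * 1"
    by (metis k(2) l(2) mult.assoc mult.right_neutral)
  then have "1 = k * l"
    by (metis assms(3) mult_left_cancel)
  then have "eis_unit k"
    unfolding eis_unit_def using k l by (intro eis_dvdI)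
  then show ?thesis
    using that k(2) by (simp add: mult.commute)
qed

section \<open>Normal forms in the sector \<open>EisA\<close>\<close>

lemma arg02pi_nonneg: "0 \<le> arg02pi z"
  using Arg_bounded[of z] by (auto simp: arg02pi_def)

lemma rcis_cmod_arg02pi: "rcis (cmod z) (arg02pi z) = z"
  using rcis_cmod_Arg[of z] by (auto simp: arg02pi_def rcis_def simp flip: cis_mult)

lemma EisA_iff_rcis:
  "z \<in> EisA \<longleftrightarrow> z \<in> Eis \<and> (\<exists>r \<phi>. r > 0 \<and> 0 \<le> \<phi> \<and> \<phi> < pi/3 \<and> z = rcis r \<phi>)"
proof
  assume "z \<in> EisA"
  then show "z \<in> Eis \<and> (\<exists>r \<phi>. r > 0 \<and> 0 \<le> \<phi> \<and> \<phi> < pi/3 \<and> z = rcis r \<phi>)"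
    using rcis_cmod_arg02pi[of z, symmetric] unfolding EisA_def
    by (intro conjI exI[of _ "cmod z"] exI[of _ "arg02pi z"]) auto
next
  assume "z \<in> Eis \<and> (\<exists>r \<phi>. r > 0 \<and> 0 \<le> \<phi> \<and> \<phi> < pi/3 \<and> z = rcis r \<phi>)"
  then obtain r \<phi> where z: "z \<in> Eis" "r > 0" "0 \<le> \<phi>" "\<phi> < pi/3" "z = rcis r \<phi>"
    by blast
  have "Arg z = \<phi>"
    using z pi_gt_zero by (simp add: Arg_rcis)
  then show "z \<in> EisA"
    using z by (simp add: EisA_def arg02pi_def)
qed

lemma EisA_imp_Eis: "z \<in> EisA \<Longrightarrow> z \<in> Eis" and EisA_nonzero: "z \<in> EisA \<Longrightarrow> z \<noteq> 0"
  by (simp_all add: EisA_def)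

lemma one_EisA: "1 \<in> EisA"
  by (simp add: EisA_def arg02pi_def)

text \<open>Multiplying by a power of the unit \<open>cnj omega = cis (- pi/3)\<close> rotates \<open>z\<close> into the sector.\<close>

lemma EisA_associate_ex:
  assumes "z \<in> Eis" "z \<noteq> 0"
  obtains u where "eis_unit u" "u * z \<in> EisA"
proof -
  define \<theta> where "\<theta> = arg02pi z"
  define k where "k = nat \<lfloor>\<theta> / (pi/3)\<rfloor>"
  have "real k = of_int \<lfloor>\<theta> / (pi/3)\<rfloor>"
    using arg02pi_nonneg[of z] by (simp add: k_def \<theta>_def)
  then have "real k \<le> \<theta> / (pi/3)" "\<theta> / (pi/3) < real k + 1"
    using floor_eq_iff[of "\<theta> / (pi/3)" "\<lfloor>\<theta> / (pi/3)\<rfloor>"] by simp_all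
  then have k: "real k * (pi/3) \<le> \<theta>" "\<theta> < (real k + 1) * (pi/3)"
    by (simp_all add: pos_le_divide_eq pos_divide_less_eq)
  define u where "u = cnj omega ^ k"
  have u: "u = cis (real k * (- (pi/3)))"
    unfolding u_def cnj_omega_eq_cis
    by (rule Complex.DeMoivre) \<comment> \<open>HOL-Analysis shadows the name by a cos/sin version\<close>
  have "u \<in> Eis"
    unfolding u_def by simp
  with u have "eis_unit u"
    by (simp add: eis_unit_iff)
  have "u * z = cis (real k * - (pi/3)) * rcis (cmod z) \<theta>"
    using rcis_cmod_arg02pi[of z] by (simp only: u \<theta>_def)
  also have "\<dots> = rcis (cmod z) (\<theta> - real k * (pi/3))"
    unfolding cis_rcis_eq rcis_mult by (simp add: algebra_simps)
  finally have uz: "u * z = rcis (cmod z) (\<theta> - real k * (pi/3))" .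
  have "\<exists>r \<phi>. r > 0 \<and> 0 \<le> \<phi> \<and> \<phi> < pi/3 \<and> u * z = rcis r \<phi>"
    by (rule exI[of _ "cmod z"], rule exI[of _ "\<theta> - real k * (pi/3)"])
      (use assms(2) k uz in \<open>auto simp: algebra_simps\<close>)
  then have "u * z \<in> EisA"
    using assms(1) \<open>u \<in> Eis\<close> by (simp add: EisA_iff_rcis)
  with \<open>eis_unit u\<close> show ?thesis
    using that by blast
qed

lemma eis_unit_Re_gt_half:
  assumes "eis_unit u" "Re u > 1/2"
  shows "u = 1"
proof -
  have u: "u \<in> Eis" "(cmod u)^2 = 1"
    using assms(1) by (simp_all add: eis_unit_iff)
  have "(cmod (u - 1))^2 = (cmod u)^2 - 2 * Re u + 1"
    unfolding cmod_power2 by (simp add: power2_eq_square algebra_simps)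
  then have "(cmod (u - 1))^2 < 1"
    using u(2) assms(2) by simp
  then have "cmod (u - 1) < 1"
    by (simp add: power_less_one_iff)
  then show ?thesis
    using Eis_cmod_less_1[of "u - 1"] u(1) by simp
qed

lemma EisA_associate_unique:
  assumes "x \<in> EisA" "eis_unit u" "u * x \<in> EisA"
  shows "u = 1"
proof -
  obtain r \<alpha> where x: "r > 0" "0 \<le> \<alpha>" "\<alpha> < pi/3" "x = rcis r \<alpha>"
    using assms(1) EisA_iff_rcis by blast
  obtain s \<beta> where ux: "s > 0" "0 \<le> \<beta>" "\<beta> < pi/3" "u * x = rcis s \<beta>"
    using assms(3) EisA_iff_rcis by blast
  have "x \<noteq> 0"
    using x(1,4) by simp
  then have "u = (u * x) / x"
    by simp
  also have "\<dots> = rcis s \<beta> / rcis r \<alpha>"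
    unfolding ux(4) using x(4) by simp
  also have "\<dots> = rcis (s/r) (\<beta> - \<alpha>)"
    by (rule rcis_divide)
  finally have "u = rcis (s/r) (\<beta> - \<alpha>)" .
  moreover have "cmod u = 1"
    using assms(2) by (simp add: eis_unit_iff)
  ultimately have "Re u = cos (\<beta> - \<alpha>)"
    using x(1) ux(1) by simp
  moreover have "\<bar>\<beta> - \<alpha>\<bar> < pi/3"
    unfolding abs_less_iff using x(2,3) ux(2,3) by linarith
  then have "cos (pi/3) < cos \<bar>\<beta> - \<alpha>\<bar>"
    by (intro cos_monotone_0_pi) auto
  ultimately have "Re u > 1/2"
    by (simp add: cos_60)
  then show ?thesis
    using eis_unit_Re_gt_half[OF assms(2)] by blast
qed

definition eis_normal :: "complex \<Rightarrow> complex" where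
  "eis_normal x = (SOME y. y \<in> EisA \<and> (\<exists>u. eis_unit u \<and> y = u * x))"

lemma eis_normal:
  assumes "x \<in> Eis" "x \<noteq> 0"
  obtains u where "eis_unit u" "eis_normal x = u * x" "eis_normal x \<in> EisA"
proof -
  obtain u where "eis_unit u" "u * x \<in> EisA"
    using EisA_associate_ex[OF assms] .
  then have "\<exists>y. y \<in> EisA \<and> (\<exists>u. eis_unit u \<and> y = u * x)"
    by blast
  then have "eis_normal x \<in> EisA \<and> (\<exists>u. eis_unit u \<and> eis_normal x = u * x)"
    unfolding eis_normal_def by (rule someI_ex)
  then show ?thesis
    using that by blast
qed

lemma eis_normal_unit_mult:
  assumes "x \<in> EisA" "eis_unit w"
  shows "eis_normal (w * x) = x"
proof -
  have "w * x \<in> Eis" "w * x \<noteq> 0"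
    using assms EisA_imp_Eis EisA_nonzero eis_unit_imp_Eis eis_unit_nonzero by auto
  then obtain u where u: "eis_unit u" "eis_normal (w * x) = (u * w) * x" "eis_normal (w * x) \<in> EisA"
    by (metis eis_normal mult.assoc)
  then have "u * w = 1"
    using EisA_associate_unique[OF assms(1) eis_unit_mult[OF u(1) assms(2)]] by simp
  then show ?thesis
    using u(2) by simp
qed

lemma cmod_eis_normal: "x \<in> Eis \<Longrightarrow> x \<noteq> 0 \<Longrightarrow> cmod (eis_normal x) = cmod x"
  by (metis eis_normal eis_unit_iff mult_1 norm_mult)

section \<open>Unitary divisors\<close>

definition unitary_divisors :: "complex \<Rightarrow> complex set" where
  "unitary_divisors z = {x. unitary_div x z}"

lemma delta_star_eq_sum: "delta_star m z = (\<Sum>x\<in>unitary_divisors z. cmod x powi m)"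
  by (simp add: delta_star_def unitary_divisors_def)

lemma mem_unitary_divisors_iff:
  assumes "z \<in> Eis"
  shows "x \<in> unitary_divisors z \<longleftrightarrow> x \<in> EisA \<and> (\<exists>y\<in>Eis. z = x * y \<and> eis_coprime x y)"
proof
  assume "x \<in> unitary_divisors z"
  then have x: "x \<in> EisA" "eis_dvd x z" "eis_coprime x (z / x)"
    by (auto simp: unitary_divisors_def unitary_div_def)
  obtain y where "y \<in> Eis" "z = x * y"
    using x(2) by (rule eis_dvdE)
  moreover have "z / x = y"
    using calculation EisA_nonzero[OF x(1)] by simp
  ultimately show "x \<in> EisA \<and> (\<exists>y\<in>Eis. z = x * y \<and> eis_coprime x y)"
    using x by auto
next
  assume "x \<in> EisA \<and> (\<exists>y\<in>Eis. z = x * y \<and> eis_coprime x y)"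
  then obtain y where x: "x \<in> EisA" "y \<in> Eis" "z = x * y" "eis_coprime x y"
    by blast
  have "z / x = y"
    using x EisA_nonzero[OF x(1)] by simp
  moreover have "eis_dvd x z"
    using x EisA_imp_Eis by (intro eis_dvdI[of x y]) auto
  ultimately show "x \<in> unitary_divisors z"
    using x by (simp add: unitary_divisors_def unitary_div_def)
qed

lemma eis_normal_mem_unitary_divisors:
  assumes "d \<in> Eis" "d' \<in> Eis" "d \<noteq> 0" "eis_coprime d d'"
  shows "eis_normal d \<in> unitary_divisors (d * d')"
proof -
  obtain u where u: "eis_unit u" "eis_normal d = u * d" "eis_normal d \<in> EisA"
    using eis_normal[OF assms(1,3)] .
  obtain v where v: "eis_unit v" "u * v = 1"
    using eis_unit_inverse[OF u(1)] .
  have "eis_normal d * (v * d') = (u * v) * (d * d')"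
    using u(2) by (simp add: algebra_simps)
  also have "\<dots> = d * d'"
    using v(2) by simp
  finally have "d * d' = eis_normal d * (v * d')" ..
  moreover have "eis_coprime (eis_normal d) (v * d')"
    using eis_coprime_unit_mult[OF assms(4) u(1) v(1) assms(1,2)] u(2) by simp
  moreover have "v * d' \<in> Eis"
    using v(1) assms(2) eis_unit_imp_Eis by simp
  ultimately show ?thesis
    unfolding mem_unitary_divisors_iff[OF Eis_mult[OF assms(1,2)]] using u(3) by blast
qed

lemma one_mem_unitary_divisors: "z \<in> Eis \<Longrightarrow> 1 \<in> unitary_divisors z"
  unfolding mem_unitary_divisors_iff eis_coprime_def eis_unit_def
  using one_EisA by (intro conjI bexI[of _ z]) auto

lemma unitary_divisors_unit:
  assumes "eis_unit z"
  shows "unitary_divisors z = {1}"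
proof -
  have z: "z \<in> Eis"
    using assms by (rule eis_unit_imp_Eis)
  have "x = 1" if x_mem: "x \<in> unitary_divisors z" for x
  proof -
    obtain y where x: "x \<in> EisA" "y \<in> Eis" "z = x * y"
      using x_mem mem_unitary_divisors_iff[OF z] by blast
    then have "eis_dvd x z"
      using EisA_imp_Eis by (intro eis_dvdI[of x y]) auto
    then have "eis_unit x"
      using assms by (rule eis_dvd_unit_imp_unit)
    then show "x = 1"
      using EisA_associate_unique[OF one_EisA, of x] x(1) by simp
  qed
  moreover have "1 \<in> unitary_divisors z"
    using z by (rule one_mem_unitary_divisors)
  ultimately show ?thesis
    by blast
qed

text \<open>Up to units these are \<open>1\<close> and the prime powers.\<close>

definition eis_coprime_indecomposable :: "complex \<Rightarrow> bool" where
  "eis_coprime_indecomposable z \<longleftrightarrow>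
     \<not> (\<exists>a\<in>Eis. \<exists>b\<in>Eis. \<not> eis_unit a \<and> \<not> eis_unit b \<and> z = a * b \<and> eis_coprime a b)"

lemma eis_normal_neq_1:
  assumes "z \<in> Eis" "z \<noteq> 0" "\<not> eis_unit z"
  shows "eis_normal z \<noteq> 1"
proof
  assume "eis_normal z = 1"
  moreover obtain u where "eis_unit u" "eis_normal z = u * z"
    using eis_normal[OF assms(1,2)] by blast
  ultimately have "eis_dvd z 1"
    using assms(1) eis_unit_imp_Eis by (intro eis_dvdI[of z u]) (auto simp: mult.commute)
  then show False
    using assms(3) by (simp add: eis_unit_def)
qed

lemma unitary_divisors_indecomposable:
  assumes "z \<in> Eis" "z \<noteq> 0" "eis_coprime_indecomposable z"
  shows "unitary_divisors z = {1, eis_normal z}"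
proof -
  have "x \<in> {1, eis_normal z}" if x_mem: "x \<in> unitary_divisors z" for x
  proof -
    obtain y where x: "x \<in> EisA" "y \<in> Eis" "z = x * y" "eis_coprime x y"
      using x_mem unfolding mem_unitary_divisors_iff[OF assms(1)] by blast
    have "x \<in> Eis"
      using x(1) by (rule EisA_imp_Eis)
    then consider "eis_unit x" | "eis_unit y"
      using assms(3) x(2-4) unfolding eis_coprime_indecomposable_def by blast
    then show ?thesis
    proof cases
      case 1
      then show ?thesis
        using EisA_associate_unique[OF one_EisA, of x] x(1) by simp
    next
      case 2
      then show ?thesis
        using eis_normal_unit_mult[OF x(1) 2] x(3) by (simp add: mult.commute)
    qed
  qed
  moreover have "1 \<in> unitary_divisors z"
    using assms(1) by (rule one_mem_unitary_divisors)
  moreover have "eis_normal z \<in> unitary_divisors z"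
    using eis_normal_mem_unitary_divisors[of z 1] eis_coprime_unit[of 1 z] assms(1,2) by simp
  ultimately show ?thesis
    by blast
qed

lemma delta_star_unit: "eis_unit z \<Longrightarrow> delta_star m z = 1"
  by (simp add: delta_star_eq_sum unitary_divisors_unit)

lemma delta_star_indecomposable:
  assumes "z \<in> Eis" "z \<noteq> 0" "\<not> eis_unit z" "eis_coprime_indecomposable z"
  shows "delta_star m z = 1 + cmod z powi m"
  using unitary_divisors_indecomposable[OF assms(1,2,4)] eis_normal_neq_1[OF assms(1-3)]
    cmod_eis_normal[OF assms(1,2)]
  by (simp add: delta_star_eq_sum)

section \<open>Multiplicativity of \<open>delta_star\<close>\<close>

lemma unitary_divisors_mult_mem:
  assumes "a \<in> Eis" "b \<in> Eis" "a \<noteq> 0" "b \<noteq> 0" "eis_coprime a b"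
    and "d \<in> unitary_divisors a" "e \<in> unitary_divisors b"
  shows "eis_normal (d * e) \<in> unitary_divisors (a * b)"
proof -
  obtain d' where d: "d \<in> EisA" "d' \<in> Eis" "a = d * d'" "eis_coprime d d'"
    using assms(6) mem_unitary_divisors_iff[OF assms(1)] by blast
  obtain e' where e: "e \<in> EisA" "e' \<in> Eis" "b = e * e'" "eis_coprime e e'"
    using assms(7) mem_unitary_divisors_iff[OF assms(2)] by blast
  have dE: "d \<in> Eis" "d \<noteq> 0" and eE: "e \<in> Eis" "e \<noteq> 0"
    using d(1) e(1) EisA_imp_Eis EisA_nonzero by auto
  have "d' * e' \<noteq> 0"
    using assms(3,4) d(3) e(3) by auto
  have "eis_coprime d e'" "eis_coprime e d'"
    using assms(5) eis_coprime_sym d e dE eE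
    by (metis eis_coprime_dvd eis_dvd_mult_right eis_dvd_mult_left)+
  then have "eis_coprime d (d' * e')" "eis_coprime e (d' * e')"
    using d e dE eE eis_coprime_mult by (auto simp: mult.commute)
  then have "eis_coprime (d * e) (d' * e')"
    using eis_coprime_mult[of "d' * e'" d e] d(2) e(2) dE eE \<open>d' * e' \<noteq> 0\<close> eis_coprime_sym
    by auto
  moreover have "a * b = (d * e) * (d' * e')"
    using d(3) e(3) by (simp add: algebra_simps)
  ultimately show ?thesis
    using eis_normal_mem_unitary_divisors[of "d * e" "d' * e'"] dE eE d(2) e(2) by simp
qed

lemma eis_normal_eq_imp_associated:
  assumes "x \<in> Eis" "x \<noteq> 0" "y \<in> Eis" "y \<noteq> 0" "eis_normal x = eis_normal y"
  obtains w where "eis_unit w" "x = w * y"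
proof -
  obtain u where u: "eis_unit u" "eis_normal x = u * x"
    using eis_normal[OF assms(1,2)] by blast
  obtain u' where u': "eis_unit u'" "eis_normal y = u' * y"
    using eis_normal[OF assms(3,4)] by blast
  obtain v where v: "eis_unit v" "u * v = 1"
    using eis_unit_inverse[OF u(1)] .
  have "x = v * (u * x)"
    using v(2) by (simp add: algebra_simps)
  also have "\<dots> = (v * u') * y"
    using assms(5) u(2) u'(2) by (simp add: algebra_simps)
  finally show ?thesis
    using that eis_unit_mult[OF v(1) u'(1)] by blast
qed

lemma EisA_dvd_antisym:
  assumes "x \<in> EisA" "y \<in> EisA" "eis_dvd x y" "eis_dvd y x"
  shows "x = y"
proof -
  obtain w where "eis_unit w" "y = w * x"
    using eis_dvd_antisym[OF assms(3,4) EisA_nonzero[OF assms(1)]] .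
  then show ?thesis
    using EisA_associate_unique[OF assms(1)] assms(2) by simp
qed

lemma unitary_divisor_dvd_of_associated:
  assumes "a \<in> Eis" "b \<in> Eis" "eis_coprime a b"
    and "d \<in> unitary_divisors a" "e \<in> Eis" "d1 \<in> unitary_divisors a" "e1 \<in> unitary_divisors b"
    and "eis_unit w" "d * e = w * (d1 * e1)"
  shows "eis_dvd d d1"
proof -
  obtain d' where d: "d \<in> EisA" "d' \<in> Eis" "a = d * d'"
    using assms(4) mem_unitary_divisors_iff[OF assms(1)] by blast
  obtain d1' where d1: "d1 \<in> EisA" "d1' \<in> Eis" "a = d1 * d1'"
    using assms(6) mem_unitary_divisors_iff[OF assms(1)] by blast
  obtain e1' where e1: "e1 \<in> EisA" "e1' \<in> Eis" "b = e1 * e1'"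
    using assms(7) mem_unitary_divisors_iff[OF assms(2)] by blast
  have E: "d \<in> Eis" "d \<noteq> 0" "d1 \<in> Eis" "e1 \<in> Eis" "w \<in> Eis"
    using d(1) d1(1) e1(1) assms(8) EisA_imp_Eis EisA_nonzero eis_unit_imp_Eis by auto
  have "eis_coprime d e1"
    using eis_coprime_dvd[OF assms(3)] d e1 E eis_dvd_mult_right by metis
  then have "eis_coprime d (w * e1)"
    using eis_coprime_unit_mult[of d e1 1 w] assms(8) E by simp
  moreover have "eis_dvd d ((w * e1) * d1)"
    using assms(9) E assms(5) eis_dvd_mult_right[of d e] by (simp add: algebra_simps)
  ultimately show ?thesis
    using eis_coprime_dvd_mult[of d "w * e1" d1] E by simp
qed

lemma unitary_divisors_mult_inj:
  assumes "a \<in> Eis" "b \<in> Eis" "eis_coprime a b"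
    and "d \<in> unitary_divisors a" "e \<in> unitary_divisors b"
    and "d1 \<in> unitary_divisors a" "e1 \<in> unitary_divisors b"
    and "eis_normal (d * e) = eis_normal (d1 * e1)"
  shows "d = d1 \<and> e = e1"
proof -
  have A: "d \<in> EisA" "e \<in> EisA" "d1 \<in> EisA" "e1 \<in> EisA"
    using assms(4-7) mem_unitary_divisors_iff assms(1,2) by blast+
  then have E: "d * e \<in> Eis" "d * e \<noteq> 0" "d1 * e1 \<in> Eis" "d1 * e1 \<noteq> 0"
    using EisA_imp_Eis EisA_nonzero by auto
  obtain w where w: "eis_unit w" "d * e = w * (d1 * e1)"
    using eis_normal_eq_imp_associated[OF E assms(8)] .
  obtain w' where w': "eis_unit w'" "d1 * e1 = w' * (d * e)"
    using eis_normal_eq_imp_associated[OF E(3,4,1,2) assms(8)[symmetric]] .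
  have "eis_dvd d d1" "eis_dvd d1 d"
    using unitary_divisor_dvd_of_associated[OF assms(1-3)] assms(4-7) w w' A EisA_imp_Eis
    by blast+
  then have "d = d1"
    using EisA_dvd_antisym A by blast
  then have "e = w * e1"
    using w(2) EisA_nonzero[OF A(1)] by (simp add: algebra_simps)
  then have "e = e1"
    using EisA_associate_unique[OF A(4) w(1)] A(2) by simp
  with \<open>d = d1\<close> show ?thesis ..
qed

lemma unitary_divisors_mult_surj:
  assumes "a \<in> Eis" "b \<in> Eis" "x \<in> unitary_divisors (a * b)"
  obtains d e where "d \<in> unitary_divisors a" "e \<in> unitary_divisors b" "x = eis_normal (d * e)"
proof -
  obtain y where x: "x \<in> EisA" "y \<in> Eis" "a * b = x * y" "eis_coprime x y"
    using assms(3) mem_unitary_divisors_iff[of "a * b"] assms(1,2) by auto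
  have xE: "x \<in> Eis" "x \<noteq> 0"
    using x(1) EisA_imp_Eis EisA_nonzero by auto
  obtain g h a' b' where gh: "g \<in> Eis" "h \<in> Eis" "a' \<in> Eis" "b' \<in> Eis"
    "x = g * h" "y = a' * b'" "a = g * a'" "b = h * b'"
    using eis_four_number[OF xE(1) x(2) assms(1,2) xE(2) x(3)[symmetric]] .
  have "g \<noteq> 0" "h \<noteq> 0"
    using xE(2) gh(5) by auto
  have "eis_coprime g a'" "eis_coprime h b'"
    using eis_coprime_dvd[OF x(4)] gh eis_dvd_mult_right eis_dvd_mult_left by metis+
  then have "eis_normal g \<in> unitary_divisors a" "eis_normal h \<in> unitary_divisors b"
    using eis_normal_mem_unitary_divisors gh \<open>g \<noteq> 0\<close> \<open>h \<noteq> 0\<close> by simp_all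
  moreover have "eis_normal (eis_normal g * eis_normal h) = x"
  proof -
    obtain u where u: "eis_unit u" "eis_normal g = u * g"
      using eis_normal[OF gh(1) \<open>g \<noteq> 0\<close>] by blast
    obtain v where v: "eis_unit v" "eis_normal h = v * h"
      using eis_normal[OF gh(2) \<open>h \<noteq> 0\<close>] by blast
    have "eis_normal g * eis_normal h = (u * v) * x"
      using u(2) v(2) gh(5) by (simp add: algebra_simps)
    then show ?thesis
      using eis_normal_unit_mult[OF x(1) eis_unit_mult[OF u(1) v(1)]] by simp
  qed
  ultimately show ?thesis
    using that by metis
qed

lemma unitary_divisors_mult_bij:
  assumes "a \<in> Eis" "b \<in> Eis" "a \<noteq> 0" "b \<noteq> 0" "eis_coprime a b"
  shows "bij_betw (\<lambda>(d, e). eis_normal (d * e))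
    (unitary_divisors a \<times> unitary_divisors b) (unitary_divisors (a * b))"
  unfolding bij_betw_def
proof
  show "inj_on (\<lambda>(d, e). eis_normal (d * e)) (unitary_divisors a \<times> unitary_divisors b)"
  proof (rule inj_onI, clarify)
    fix d e d1 e1
    assume "d \<in> unitary_divisors a" "e \<in> unitary_divisors b"
      "d1 \<in> unitary_divisors a" "e1 \<in> unitary_divisors b"
      "eis_normal (d * e) = eis_normal (d1 * e1)"
    then show "d = d1 \<and> e = e1"
      by (rule unitary_divisors_mult_inj[OF assms(1,2,5)])
  qed
  show "(\<lambda>(d, e). eis_normal (d * e)) ` (unitary_divisors a \<times> unitary_divisors b)
      = unitary_divisors (a * b)"
  proof
    show "(\<lambda>(d, e). eis_normal (d * e)) ` (unitary_divisors a \<times> unitary_divisors b)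
        \<subseteq> unitary_divisors (a * b)"
      using unitary_divisors_mult_mem[OF assms] by auto
    show "unitary_divisors (a * b)
        \<subseteq> (\<lambda>(d, e). eis_normal (d * e)) ` (unitary_divisors a \<times> unitary_divisors b)"
    proof
      fix x
      assume "x \<in> unitary_divisors (a * b)"
      then obtain d e where "d \<in> unitary_divisors a" "e \<in> unitary_divisors b" "x = eis_normal (d * e)"
        by (rule unitary_divisors_mult_surj[OF assms(1,2)])
      then show "x \<in> (\<lambda>(d, e). eis_normal (d * e)) ` (unitary_divisors a \<times> unitary_divisors b)"
        by force
    qed
  qed
qed

lemma delta_star_mult:
  assumes "a \<in> Eis" "b \<in> Eis" "a \<noteq> 0" "b \<noteq> 0" "eis_coprime a b"
  shows "delta_star m (a * b) = delta_star m a * delta_star m b"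
proof -
  have "delta_star m (a * b)
      = (\<Sum>(d, e)\<in>unitary_divisors a \<times> unitary_divisors b. cmod (eis_normal (d * e)) powi m)"
    unfolding delta_star_eq_sum
    using sum.reindex_bij_betw[OF unitary_divisors_mult_bij[OF assms], of "\<lambda>x. cmod x powi m"]
    by (simp add: case_prod_beta)
  also have "\<dots> = (\<Sum>(d, e)\<in>unitary_divisors a \<times> unitary_divisors b. cmod d powi m * cmod e powi m)"
  proof (rule sum.cong[OF refl], clarify)
    fix d e
    assume "d \<in> unitary_divisors a" "e \<in> unitary_divisors b"
    then have "d \<in> EisA" "e \<in> EisA"
      using assms(1,2) mem_unitary_divisors_iff by blast+
    then show "cmod (eis_normal (d * e)) powi m = cmod d powi m * cmod e powi m"
      using EisA_imp_Eis EisA_nonzero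
      by (simp add: cmod_eis_normal norm_mult power_int_mult_distrib)
  qed
  also have "\<dots> = delta_star m a * delta_star m b"
    unfolding delta_star_eq_sum sum_product sum.cartesian_product ..
  finally show ?thesis .
qed

section \<open>\<open>delta_star 2\<close> modulo 3\<close>

lemma eis_norm_less_mult:
  assumes "a \<in> Eis" "b \<in> Eis" "a \<noteq> 0" "b \<noteq> 0" "\<not> eis_unit b"
  shows "eis_norm a < eis_norm (a * b)"
proof -
  have "eis_norm a * 1 < eis_norm a * eis_norm b"
    using eis_norm_pos[OF assms(1,3)] eis_norm_nonunit[OF assms(2,4,5)] by simp
  then show ?thesis
    using eis_norm_mult[OF assms(1,2)] by simp
qed

lemma delta_star_2_not_multiple_of_3:
  assumes "z \<in> Eis" "z \<noteq> 0"
  shows "\<exists>k. delta_star 2 z = of_int k \<and> \<not> 3 dvd k"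
  using assms
proof (induction z rule: measure_induct_rule[where f = "\<lambda>z. nat (eis_norm z)"])
  case (less z)
  consider "eis_unit z" | "\<not> eis_unit z" "eis_coprime_indecomposable z"
    | a b where "a \<in> Eis" "b \<in> Eis" "\<not> eis_unit a" "\<not> eis_unit b" "z = a * b" "eis_coprime a b"
    unfolding eis_coprime_indecomposable_def by blast
  then show ?case
  proof cases
    case 1
    then show ?thesis
      by (intro exI[of _ 1]) (simp add: delta_star_unit)
  next
    case 2
    have "delta_star 2 z = of_int (1 + eis_norm z)"
      using delta_star_indecomposable[OF less.prems 2] of_int_eis_norm[OF less.prems(1)] by simp
    then show ?thesis
      using eis_norm_mod_3[OF less.prems(1)] by (intro exI[of _ "1 + eis_norm z"]) presburger
  next
    case (3 a b)
    then have "a \<noteq> 0" "b \<noteq> 0"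
      using less.prems(2) by auto
    then have "eis_norm a < eis_norm z" "eis_norm b < eis_norm z"
      using eis_norm_less_mult[of a b] eis_norm_less_mult[of b a] 3 by (simp_all add: mult.commute)
    then have "nat (eis_norm a) < nat (eis_norm z)" "nat (eis_norm b) < nat (eis_norm z)"
      using eis_norm_pos[OF less.prems] by simp_all
    then obtain ka kb where "delta_star 2 a = of_int ka" "\<not> 3 dvd ka"
      "delta_star 2 b = of_int kb" "\<not> 3 dvd kb"
      using less.IH 3(1,2) \<open>a \<noteq> 0\<close> \<open>b \<noteq> 0\<close> by meson
    moreover have "delta_star 2 z = delta_star 2 a * delta_star 2 b"
      using delta_star_mult 3 \<open>a \<noteq> 0\<close> \<open>b \<noteq> 0\<close> by simp
    ultimately show ?thesis
      using prime_dvd_mult_iff[of "3::int" ka kb] by (intro exI[of _ "ka * kb"]) simp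
  qed
qed

theorem corollary2p2:
  fixes t :: int
  assumes "t > 0" and "3 dvd t"
  shows "\<not> (\<exists>z\<in>Eis. z \<noteq> 0 \<and> I_star 2 z = of_int t)"
proof
  assume "\<exists>z\<in>Eis. z \<noteq> 0 \<and> I_star 2 z = of_int t"
  then obtain z where z: "z \<in> Eis" "z \<noteq> 0" "I_star 2 z = of_int t"
    by blast
  obtain k where k: "delta_star 2 z = of_int k" "\<not> 3 dvd k"
    using delta_star_2_not_multiple_of_3[OF z(1,2)] by blast
  have "of_int k = of_int t * (cmod z)^2"
    using z(2,3) k(1) by (simp add: I_star_def field_simps)
  then have "k = t * eis_norm z"
    using of_int_eis_norm[OF z(1)] by (metis of_int_eq_iff of_int_mult)
  then show False
    using assms(2) k(2) by simp
qed

end
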